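(* Let $\mu$ be a $\sigma$-finite signed measure on a measurable space $(\Omega,\mathcal B)$ and let $\Omega^+,\Omega^-\in\mathcal B$ be a Hahn decomposition for $\mu$, i.e. $\Omega^+\cap\Omega^-=\emptyset$, $\Omega^+\cup\Omega^-=\Omega$, $\mu(A)\ge0$ for all measurable $A\subset\Omega^+$ and $\mu(A)\le0$ for all measurable $A\subset\Omega^-$. Let $\nu$ be another $\sigma$-finite signed measure on $(\Omega,\mathcal B)$ and define $\nu'(A)=\nu(A\cap\Omega^+)-\nu(A\cap\Omega^-)$ for $A\in\mathcal B$. Then $\nu'$ is a $\sigma$-finite signed measure on $(\Omega,\mathcal B)$, and $\nu$ satisfies $(\mathcal L)$ with respect to $\mu$ if and only if $\nu'$ satisfies $(\mathcal L)$ with respect to $|\mu|$; likewise $\nu$ satisfies $(\mathcal O)$ with respect to $\mu$ if and only if $\nu'$ satisfies $(\mathcal O)$ with respect to $|\mu|$.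
   Context: A $\sigma$-finite signed measure on $(\Omega,\mathcal B)$ is a countably additive extended-real-valued set function vanishing on $\emptyset$, taking at most one of the values $+\infty,-\infty$, whose total variation $|\mu|$ is $\sigma$-finite. Given $\sigma$-finite signed measures $\mu,\nu$, $\nu$ satisfies $(\mathcal L)$ with respect to $\mu$ if for all $A,B\in\mathcal B$ with $\mu(A)=\mu(B)\neq\pm\infty$ one has $\nu(A)=\nu(B)\neq\pm\infty$; $\nu$ satisfies $(\mathcal O)$ with respect to $\mu$ if it satisfies $(\mathcal L)$ and for all $A,B\in\mathcal B$ with $\mu(A)\le\mu(B)$ one has $\nu(A)\le\nu(B)$.
   Formalization: The values $\nu(A\cap\Omega^+)$ and $\nu(A\cap\Omega^-)$ are also assumed never to be both infinite for the same $A\in\mathcal B$, so $\nu'(A)$ never has the form infinity minus infinity. The statement above fails without it. *)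

theory Defs
  imports "HOL-Analysis.Analysis"
begin

text \<open>A measurable space is represented by a measure M; only space M and sets M are used.
  Signed measures are extended-real valued set functions on sets M.\<close>

definition signed_measure :: "'a measure \<Rightarrow> ('a set \<Rightarrow> ereal) \<Rightarrow> bool" where
  "signed_measure M \<mu> \<longleftrightarrow>
     \<mu> {} = 0 \<and>
     (\<not> (\<exists>A\<in>sets M. \<mu> A = \<infinity>) \<or> \<not> (\<exists>A\<in>sets M. \<mu> A = -\<infinity>)) \<and>
     (\<forall>A :: nat \<Rightarrow> 'a set. range A \<subseteq> sets M \<longrightarrow> disjoint_family A \<longrightarrow>
        (\<lambda>n. \<mu> (A n)) sums \<mu> (\<Union>n. A n))"

definition total_variation :: "'a measure \<Rightarrow> ('a set \<Rightarrow> ereal) \<Rightarrow> 'a set \<Rightarrow> ereal" where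
  "total_variation M \<mu> A =
     (SUP P \<in> {P. finite P \<and> P \<subseteq> sets M \<and> disjoint P \<and> \<Union>P \<subseteq> A}. \<Sum>B\<in>P. \<bar>\<mu> B\<bar>)"

definition sigma_finite_signed_measure :: "'a measure \<Rightarrow> ('a set \<Rightarrow> ereal) \<Rightarrow> bool" where
  "sigma_finite_signed_measure M \<mu> \<longleftrightarrow>
     signed_measure M \<mu> \<and>
     (\<exists>C :: nat \<Rightarrow> 'a set. range C \<subseteq> sets M \<and> (\<Union>n. C n) = space M \<and>
        (\<forall>n. total_variation M \<mu> (C n) < \<infinity>))"

definition hahn_decomposition :: "'a measure \<Rightarrow> ('a set \<Rightarrow> ereal) \<Rightarrow> 'a set \<Rightarrow> 'a set \<Rightarrow> bool" where
  "hahn_decomposition M \<mu> P N \<longleftrightarrow>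
     P \<in> sets M \<and> N \<in> sets M \<and> P \<inter> N = {} \<and> P \<union> N = space M \<and>
     (\<forall>A\<in>sets M. A \<subseteq> P \<longrightarrow> \<mu> A \<ge> 0) \<and>
     (\<forall>A\<in>sets M. A \<subseteq> N \<longrightarrow> \<mu> A \<le> 0)"

definition cond_L :: "'a measure \<Rightarrow> ('a set \<Rightarrow> ereal) \<Rightarrow> ('a set \<Rightarrow> ereal) \<Rightarrow> bool" where
  "cond_L M \<mu> \<nu> \<longleftrightarrow>
     (\<forall>A\<in>sets M. \<forall>B\<in>sets M. \<mu> A = \<mu> B \<and> \<bar>\<mu> A\<bar> \<noteq> \<infinity> \<longrightarrow>
        \<nu> A = \<nu> B \<and> \<bar>\<nu> A\<bar> \<noteq> \<infinity>)"

definition cond_O :: "'a measure \<Rightarrow> ('a set \<Rightarrow> ereal) \<Rightarrow> ('a set \<Rightarrow> ereal) \<Rightarrow> bool" where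
  "cond_O M \<mu> \<nu> \<longleftrightarrow>
     cond_L M \<mu> \<nu> \<and> (\<forall>A\<in>sets M. \<forall>B\<in>sets M. \<mu> A \<le> \<mu> B \<longrightarrow> \<nu> A \<le> \<nu> B)"

end

theory Submission
  imports Defs
begin

text \<open>On a Hahn decomposition, \<open>|\<mu>|\<close> arises from \<open>\<mu>\<close> by the same operation that turns \<open>\<nu>\<close>
  into \<open>\<nu>'\<close>: flip the sign on \<open>Neg\<close>. This reflection maps signed measures to signed measures
  (as long as no \<open>A \<inter> Pos\<close> and \<open>A \<inter> Neg\<close> both have infinite measure) and is an involution,
  so both equivalences follow once (L) and (O) are shown to be preserved by it.
  For that, compare \<open>A\<close> and \<open>B\<close> through the patched sets \<open>(A \<inter> Pos) \<union> (B \<inter> Neg)\<close> and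
  \<open>(B \<inter> Pos) \<union> (A \<inter> Neg)\<close>: moving the \<open>Neg\<close>-parts across an (in)equality between the
  reflected values of \<open>A\<close> and \<open>B\<close> yields the same relation between the values of the patched sets.\<close>

lemma ereal_diff_eq_diff_finite_iff:
  fixes x y z w :: ereal
  shows "x - y = z - w \<and> \<bar>x - y\<bar> \<noteq> \<infinity> \<longleftrightarrow> x + w = z + y \<and> \<bar>x + w\<bar> \<noteq> \<infinity>"
  by (cases x; cases y; cases z; cases w) auto

lemma ereal_diff_le_diff_iff:
  fixes x y z w :: ereal
  assumes "(\<forall>v\<in>{x, y, z, w}. v \<noteq> \<infinity>) \<or> (\<forall>v\<in>{x, y, z, w}. v \<noteq> -\<infinity>)"
    and "\<not> (\<bar>x\<bar> = \<infinity> \<and> \<bar>y\<bar> = \<infinity>)" and "\<not> (\<bar>z\<bar> = \<infinity> \<and> \<bar>w\<bar> = \<infinity>)"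
  shows "x - y \<le> z - w \<longleftrightarrow> x + w \<le> z + y"
  using assms by (cases x; cases y; cases z; cases w) auto

lemma ereal_uminus_sum:
  fixes f :: "'i \<Rightarrow> ereal"
  assumes "(\<forall>i\<in>I. f i \<noteq> \<infinity>) \<or> (\<forall>i\<in>I. f i \<noteq> -\<infinity>)"
  shows "- (\<Sum>i\<in>I. f i) = (\<Sum>i\<in>I. - f i)"
proof -
  have *: "- (\<Sum>i\<in>I. g i) = (\<Sum>i\<in>I. - g i)" if "\<forall>i\<in>I. g i \<noteq> \<infinity>" for g :: "'i \<Rightarrow> ereal"
    using that
  proof (induction I rule: infinite_finite_induct)
    case (insert i I)
    then have "g i \<noteq> \<infinity>" "sum g I \<noteq> \<infinity>" "(\<Sum>i\<in>I. - g i) = - sum g I"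
      by (auto simp: sum_Pinfty)
    then show ?case using insert.hyps by (cases "g i"; cases "sum g I") auto
  qed simp_all
  show ?thesis
    using assms *[of f] *[of "\<lambda>i. - f i"] by (auto simp: ereal_uminus_eq_reorder)
qed

lemma ereal_abs_add_le:
  fixes x y :: ereal
  shows "\<bar>x + y\<bar> \<le> \<bar>x\<bar> + \<bar>y\<bar>"
  by (cases x; cases y) auto

lemma ereal_abs_diff_le:
  fixes x y :: ereal
  shows "\<bar>x - y\<bar> \<le> \<bar>x\<bar> + \<bar>y\<bar>"
  by (cases x; cases y) auto

lemma signed_measure_empty: "signed_measure M f \<Longrightarrow> f {} = 0"
  by (simp add: signed_measure_def)

lemma signed_measure_one_sided:
  "signed_measure M f \<Longrightarrow> (\<forall>A\<in>sets M. f A \<noteq> \<infinity>) \<or> (\<forall>A\<in>sets M. f A \<noteq> -\<infinity>)"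
  by (auto simp: signed_measure_def)

lemma signed_measure_sums:
  "signed_measure M f \<Longrightarrow> range A \<subseteq> sets M \<Longrightarrow> disjoint_family A \<Longrightarrow>
    (\<lambda>n. f (A n)) sums f (\<Union>n. A n)"
  by (simp add: signed_measure_def)

lemma signed_measure_additive:
  assumes "signed_measure M f"
  shows "additive (sets M) f"
  unfolding additive_def
proof (intro ballI impI)
  fix X Y assume "X \<in> sets M" "Y \<in> sets M" "X \<inter> Y = {}"
  then have "(\<lambda>n. f (binaryset X Y n)) sums f (\<Union>n. binaryset X Y n)"
    by (intro signed_measure_sums[OF assms])
      (auto simp: range_binaryset_eq disjoint_family_on_def binaryset_def)
  moreover have "(\<lambda>n. f (binaryset X Y n)) sums (f X + f Y)"
    by (rule binaryset_sums) (rule signed_measure_empty[OF assms])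
  ultimately show "f (X \<union> Y) = f X + f Y"
    by (simp add: UN_binaryset_eq sums_unique2)
qed

lemma signed_measure_Union:
  assumes "signed_measure M f" "finite F" "F \<subseteq> sets M" "disjoint F"
  shows "(\<Sum>B\<in>F. f B) = f (\<Union>F)"
  using assms(2-4)
proof (induction F rule: finite_induct)
  case empty
  then show ?case using signed_measure_empty[OF assms(1)] by simp
next
  case (insert B F)
  have "disjoint F" using insert.prems(2) by (simp add: pairwise_insert)
  have "B \<inter> \<Union>F = {}" using insert.prems(2) insert.hyps(2) by (auto simp: pairwise_insert disjnt_def)
  with insert \<open>disjoint F\<close> have "(\<Sum>C\<in>insert B F. f C) = f B + f (\<Union>F)" by simp
  also have "\<dots> = f (B \<union> \<Union>F)"
    using insert \<open>B \<inter> \<Union>F = {}\<close>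
    by (intro additiveD[OF signed_measure_additive[OF assms(1)], symmetric]) (auto intro: sets.finite_Union)
  finally show ?case by simp
qed

lemma signed_measure_mono:
  assumes "signed_measure M f" "X \<in> sets M" "Y \<in> sets M" "X \<subseteq> Y" "0 \<le> f (Y - X)"
  shows "f X \<le> f Y"
proof -
  have "f Y = f X + f (Y - X)"
    using assms(2-4) additiveD[OF signed_measure_additive[OF assms(1)], of X "Y - X"]
    by (simp add: Un_absorb1)
  then show ?thesis using assms(5) by (simp add: add_increasing2)
qed

lemma signed_measure_restrict:
  assumes "signed_measure M f" "S \<in> sets M"
  shows "signed_measure M (\<lambda>A. f (A \<inter> S))"
  unfolding signed_measure_def
proof (intro conjI allI impI)
  show "f ({} \<inter> S) = 0" using signed_measure_empty[OF assms(1)] by simp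
  show "\<not> (\<exists>A\<in>sets M. f (A \<inter> S) = \<infinity>) \<or> \<not> (\<exists>A\<in>sets M. f (A \<inter> S) = -\<infinity>)"
    using signed_measure_one_sided[OF assms(1)] assms(2) by blast
  fix A :: "nat \<Rightarrow> 'a set" assume "range A \<subseteq> sets M" "disjoint_family A"
  then have "(\<lambda>n. f (A n \<inter> S)) sums f (\<Union>n. A n \<inter> S)"
    using assms by (intro signed_measure_sums) (auto simp: disjoint_family_on_def)
  then show "(\<lambda>n. f (A n \<inter> S)) sums f ((\<Union>n. A n) \<inter> S)" by simp
qed

lemma signed_measure_uminus:
  assumes "signed_measure M f"
  shows "signed_measure M (\<lambda>A. - f A)"
  unfolding signed_measure_def
proof (intro conjI allI impI)
  show "- f {} = 0" using signed_measure_empty[OF assms] by simp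
  show "\<not> (\<exists>A\<in>sets M. - f A = \<infinity>) \<or> \<not> (\<exists>A\<in>sets M. - f A = -\<infinity>)"
    using signed_measure_one_sided[OF assms] by (auto simp: ereal_uminus_eq_reorder)
  fix A :: "nat \<Rightarrow> 'a set" assume A: "range A \<subseteq> sets M" "disjoint_family A"
  have "(\<Sum>i<n. - f (A i)) = - (\<Sum>i<n. f (A i))" for n
    using signed_measure_one_sided[OF assms] A by (subst ereal_uminus_sum) auto
  moreover have "(\<lambda>n. \<Sum>i<n. f (A i)) \<longlonglongrightarrow> f (\<Union>n. A n)"
    using signed_measure_sums[OF assms A] by (simp add: sums_def)
  ultimately show "(\<lambda>n. - f (A n)) sums - f (\<Union>n. A n)"
    by (simp add: sums_def)
qed

lemma signed_measure_opposite_infinities: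
  assumes f: "signed_measure M f" and g: "signed_measure M g"
    and A: "A \<in> sets M" and B: "B \<in> sets M" and "f A = \<infinity>" and "g B = -\<infinity>"
  shows "f (A \<union> B) = \<infinity> \<and> g (A \<union> B) = -\<infinity>"
proof -
  have "f (A \<union> B) = f A + f (B - A)"
    using additiveD[OF signed_measure_additive[OF f], of A "B - A"] A B by simp
  moreover have "g (A \<union> B) = g B + g (A - B)"
    using additiveD[OF signed_measure_additive[OF g], of B "A - B"] A B by (simp add: Un_commute)
  moreover have "g (A - B) \<noteq> \<infinity>"
    using signed_measure_one_sided[OF g] A B \<open>g B = -\<infinity>\<close> by blast
  ultimately show ?thesis using \<open>f A = \<infinity>\<close> \<open>g B = -\<infinity>\<close> by simp
qed

lemma signed_measure_add:
  assumes f: "signed_measure M f" and g: "signed_measure M g"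
    and defined: "\<forall>A\<in>sets M. \<not> (f A = \<infinity> \<and> g A = -\<infinity>) \<and> \<not> (f A = -\<infinity> \<and> g A = \<infinity>)"
  shows "signed_measure M (\<lambda>A. f A + g A)"
  unfolding signed_measure_def
proof (intro conjI allI impI)
  show "f {} + g {} = 0" using f g by (simp add: signed_measure_empty)
  show "\<not> (\<exists>A\<in>sets M. f A + g A = \<infinity>) \<or> \<not> (\<exists>A\<in>sets M. f A + g A = -\<infinity>)"
  proof (rule ccontr)
    assume "\<not> ?thesis"
    then obtain A B where A: "A \<in> sets M" and B: "B \<in> sets M"
      and "f A = \<infinity> \<or> g A = \<infinity>" and "f B = -\<infinity> \<or> g B = -\<infinity>"
      by auto
    moreover have "\<not> (f A = \<infinity> \<and> f B = -\<infinity>)" "\<not> (g A = \<infinity> \<and> g B = -\<infinity>)"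
      using signed_measure_one_sided[OF f] signed_measure_one_sided[OF g] A B by auto
    moreover have "\<not> (f A = \<infinity> \<and> g B = -\<infinity>)" "\<not> (g A = \<infinity> \<and> f B = -\<infinity>)"
      using signed_measure_opposite_infinities[OF f g A B] signed_measure_opposite_infinities[OF g f A B]
        defined A B by (auto simp: Un_commute)
    ultimately show False by blast
  qed
  fix A :: "nat \<Rightarrow> 'a set" assume A: "range A \<subseteq> sets M" "disjoint_family A"
  then have "(\<lambda>n. (\<Sum>i<n. f (A i)) + (\<Sum>i<n. g (A i))) \<longlonglongrightarrow> f (\<Union>n. A n) + g (\<Union>n. A n)"
    using signed_measure_sums[OF f A] signed_measure_sums[OF g A] defined
    by (intro tendsto_add_ereal_general) (auto simp: sums_def)
  then show "(\<lambda>n. f (A n) + g (A n)) sums (f (\<Union>n. A n) + g (\<Union>n. A n))"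
    by (simp add: sums_def sum.distrib)
qed

lemma sum_refinement_le_total_variation:
  fixes S :: "'i \<Rightarrow> 'a set"
  assumes "f {} = 0" and F: "finite F" "F \<subseteq> sets M" "disjoint F" "\<Union>F \<subseteq> C"
    and S: "finite I" "S ` I \<subseteq> sets M" "disjoint_family_on S I"
  shows "(\<Sum>B\<in>F. \<Sum>i\<in>I. \<bar>f (B \<inter> S i)\<bar>) \<le> total_variation M f C"
proof -
  define piece where "piece = (\<lambda>(B, i). B \<inter> S i)"
  have disj: "piece p \<inter> piece q = {}" if "p \<in> F \<times> I" "q \<in> F \<times> I" "p \<noteq> q" for p q
  proof -
    obtain B i B' j where pq: "p = (B, i)" "q = (B', j)" by fastforce
    show ?thesis
    proof (cases "B = B'")
      case True
      then have "S i \<inter> S j = {}" using that S(3) pq by (auto simp: disjoint_family_on_def)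
      then show ?thesis by (auto simp: piece_def pq)
    next
      case False
      then have "B \<inter> B' = {}" using that F(3) pq by (auto simp: pairwise_def disjnt_def)
      then show ?thesis by (auto simp: piece_def pq)
    qed
  qed
  have "(\<Sum>B\<in>F. \<Sum>i\<in>I. \<bar>f (B \<inter> S i)\<bar>) = (\<Sum>p\<in>F \<times> I. \<bar>f (piece p)\<bar>)"
    by (simp add: sum.cartesian_product piece_def case_prod_beta')
  also have "\<dots> = (\<Sum>G\<in>piece ` (F \<times> I). \<bar>f G\<bar>)"
  proof (rule sum.reindex_nontrivial[symmetric, unfolded comp_def])
    show "finite (F \<times> I)" using F(1) S(1) by simp
    fix p q assume "p \<in> F \<times> I" "q \<in> F \<times> I" "p \<noteq> q" "piece p = piece q"
    then have "piece p = {}" using disj[of p q] by simp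
    then show "\<bar>f (piece p)\<bar> = 0" using assms(1) by simp
  qed
  also have "\<dots> \<le> total_variation M f C"
    unfolding total_variation_def
  proof (rule SUP_upper, intro CollectI conjI)
    show "finite (piece ` (F \<times> I))" using F(1) S(1) by simp
    show "piece ` (F \<times> I) \<subseteq> sets M" using F(2) S(2) by (auto simp: piece_def)
    show "disjoint (piece ` (F \<times> I))" by (rule pairwise_imageI) (simp add: disjnt_def disj)
    show "\<Union>(piece ` (F \<times> I)) \<subseteq> C" using F(4) by (auto simp: piece_def)
  qed
  finally show ?thesis .
qed

lemma cond_L_cong:
  assumes "\<forall>A\<in>sets M. f A = f' A" and "\<forall>A\<in>sets M. g A = g' A"
  shows "cond_L M f g \<longleftrightarrow> cond_L M f' g'"
  using assms by (simp add: cond_L_def)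

lemma cond_O_cong:
  assumes "\<forall>A\<in>sets M. f A = f' A" and "\<forall>A\<in>sets M. g A = g' A"
  shows "cond_O M f g \<longleftrightarrow> cond_O M f' g'"
  using assms cond_L_cong[OF assms] by (simp add: cond_O_def)

definition reflect :: "'a set \<Rightarrow> 'a set \<Rightarrow> ('a set \<Rightarrow> ereal) \<Rightarrow> 'a set \<Rightarrow> ereal" where
  "reflect P N f A = f (A \<inter> P) - f (A \<inter> N)"

locale measurable_bipartition =
  fixes M :: "'a measure" and P N :: "'a set"
  assumes P_sets: "P \<in> sets M" and N_sets: "N \<in> sets M"
    and disjoint: "P \<inter> N = {}" and cover: "P \<union> N = space M"
begin

text \<open>Excludes \<open>\<infinity> - \<infinity>\<close> and \<open>-\<infinity> - -\<infinity>\<close> in \<open>reflect P N f A\<close>, which ereal arithmetic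
  silently evaluates to \<open>\<infinity>\<close>.\<close>
definition reflectable :: "('a set \<Rightarrow> ereal) \<Rightarrow> bool" where
  "reflectable f \<longleftrightarrow> (\<forall>A\<in>sets M. \<not> (\<bar>f (A \<inter> P)\<bar> = \<infinity> \<and> \<bar>f (A \<inter> N)\<bar> = \<infinity>))"

definition patch :: "'a set \<Rightarrow> 'a set \<Rightarrow> 'a set" where
  "patch A B = A \<inter> P \<union> B \<inter> N"

lemma patch_sets: "A \<in> sets M \<Longrightarrow> B \<in> sets M \<Longrightarrow> patch A B \<in> sets M"
  using P_sets N_sets by (auto simp: patch_def)

lemma signed_measure_patch:
  assumes "signed_measure M f" "A \<in> sets M" "B \<in> sets M"
  shows "f (patch A B) = f (A \<inter> P) + f (B \<inter> N)"
  unfolding patch_def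
  using assms(2,3) P_sets N_sets disjoint
  by (intro additiveD[OF signed_measure_additive[OF assms(1)]]) auto

lemma signed_measure_split:
  assumes "signed_measure M f" "A \<in> sets M"
  shows "f A = f (A \<inter> P) + f (A \<inter> N)"
proof -
  have "patch A A = A" using sets.sets_into_space[OF assms(2)] cover by (auto simp: patch_def)
  then show ?thesis using signed_measure_patch[OF assms(1,2,2)] by simp
qed

lemma reflect_Int_P:
  assumes "f {} = 0"
  shows "reflect P N f (A \<inter> P) = f (A \<inter> P)"
  using assms disjoint by (simp add: reflect_def Int_assoc)

lemma reflect_Int_N:
  assumes "f {} = 0"
  shows "reflect P N f (A \<inter> N) = - f (A \<inter> N)"
proof -
  have "A \<inter> N \<inter> P = {}" using disjoint by auto
  then show ?thesis using assms by (simp add: reflect_def)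
qed

lemma reflect_reflect:
  assumes "signed_measure M f" "A \<in> sets M"
  shows "reflect P N (reflect P N f) A = f A"
  using signed_measure_split[OF assms] signed_measure_empty[OF assms(1)]
  by (simp add: reflect_def[of P N "reflect P N f"] reflect_Int_P reflect_Int_N minus_ereal_def)

lemma signed_measure_reflect:
  assumes "signed_measure M f" "reflectable f"
  shows "signed_measure M (reflect P N f)"
proof -
  have "signed_measure M (\<lambda>A. f (A \<inter> P) + - f (A \<inter> N))"
    using assms(2)
    by (intro signed_measure_add signed_measure_uminus signed_measure_restrict assms(1) P_sets N_sets)
      (auto simp: reflectable_def)
  moreover have "reflect P N f = (\<lambda>A. f (A \<inter> P) + - f (A \<inter> N))"
    by (simp add: fun_eq_iff reflect_def minus_ereal_def)
  ultimately show ?thesis by simp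
qed

lemma reflectable_reflect:
  assumes "f {} = 0" "reflectable f"
  shows "reflectable (reflect P N f)"
  using assms
  by (simp add: reflectable_def reflect_Int_P reflect_Int_N)

lemma reflect_eq_reflect_iff:
  assumes "signed_measure M f" "A \<in> sets M" "B \<in> sets M"
  shows "reflect P N f A = reflect P N f B \<and> \<bar>reflect P N f A\<bar> \<noteq> \<infinity> \<longleftrightarrow>
    f (patch A B) = f (patch B A) \<and> \<bar>f (patch A B)\<bar> \<noteq> \<infinity>"
  using ereal_diff_eq_diff_finite_iff[of "f (A \<inter> P)" "f (A \<inter> N)" "f (B \<inter> P)" "f (B \<inter> N)"]
  by (simp add: reflect_def signed_measure_patch assms)

lemma reflect_le_reflect_iff:
  assumes "signed_measure M f" "reflectable f" and "A \<in> sets M" "B \<in> sets M"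
  shows "reflect P N f A \<le> reflect P N f B \<longleftrightarrow> f (patch A B) \<le> f (patch B A)"
proof -
  have "A \<inter> P \<in> sets M" "A \<inter> N \<in> sets M" "B \<inter> P \<in> sets M" "B \<inter> N \<in> sets M"
    using assms(3,4) P_sets N_sets by auto
  then have "f (A \<inter> P) - f (A \<inter> N) \<le> f (B \<inter> P) - f (B \<inter> N) \<longleftrightarrow>
      f (A \<inter> P) + f (B \<inter> N) \<le> f (B \<inter> P) + f (A \<inter> N)"
    using signed_measure_one_sided[OF assms(1)] assms(2-4)
    by (intro ereal_diff_le_diff_iff) (auto simp: reflectable_def)
  then show ?thesis by (simp add: reflect_def signed_measure_patch assms)
qed

lemma cond_L_reflect:
  assumes f: "signed_measure M f" and g: "signed_measure M g" and L: "cond_L M f g"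
  shows "cond_L M (reflect P N f) (reflect P N g)"
  unfolding cond_L_def
proof (intro ballI impI)
  fix A B assume A: "A \<in> sets M" and B: "B \<in> sets M"
    and eq: "reflect P N f A = reflect P N f B \<and> \<bar>reflect P N f A\<bar> \<noteq> \<infinity>"
  have "f (patch A B) = f (patch B A) \<and> \<bar>f (patch A B)\<bar> \<noteq> \<infinity>"
    using eq by (rule reflect_eq_reflect_iff[OF f A B, THEN iffD1])
  then have "g (patch A B) = g (patch B A) \<and> \<bar>g (patch A B)\<bar> \<noteq> \<infinity>"
    by (rule L[unfolded cond_L_def, rule_format, OF patch_sets[OF A B] patch_sets[OF B A]])
  then show "reflect P N g A = reflect P N g B \<and> \<bar>reflect P N g A\<bar> \<noteq> \<infinity>"
    by (rule reflect_eq_reflect_iff[OF g A B, THEN iffD2])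
qed

lemma cond_O_reflect:
  assumes f: "signed_measure M f" "reflectable f" and g: "signed_measure M g" "reflectable g"
    and O: "cond_O M f g"
  shows "cond_O M (reflect P N f) (reflect P N g)"
  unfolding cond_O_def
proof (intro conjI ballI impI)
  show "cond_L M (reflect P N f) (reflect P N g)"
    using O by (intro cond_L_reflect[OF f(1) g(1)]) (simp add: cond_O_def)
  fix A B assume A: "A \<in> sets M" and B: "B \<in> sets M"
    and le: "reflect P N f A \<le> reflect P N f B"
  have "f (patch A B) \<le> f (patch B A)"
    using le by (rule reflect_le_reflect_iff[OF f A B, THEN iffD1])
  then have "g (patch A B) \<le> g (patch B A)"
    using O[unfolded cond_O_def] patch_sets[OF A B] patch_sets[OF B A] by blast
  then show "reflect P N g A \<le> reflect P N g B"
    by (rule reflect_le_reflect_iff[OF g A B, THEN iffD2])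
qed

lemma cond_L_reflect_iff:
  assumes f: "signed_measure M f" "reflectable f" and g: "signed_measure M g" "reflectable g"
  shows "cond_L M (reflect P N f) (reflect P N g) \<longleftrightarrow> cond_L M f g"
proof
  assume "cond_L M (reflect P N f) (reflect P N g)"
  then have "cond_L M (reflect P N (reflect P N f)) (reflect P N (reflect P N g))"
    by (rule cond_L_reflect[OF signed_measure_reflect[OF f] signed_measure_reflect[OF g]])
  moreover have "cond_L M (reflect P N (reflect P N f)) (reflect P N (reflect P N g)) \<longleftrightarrow> cond_L M f g"
    using f g by (intro cond_L_cong) (simp_all add: reflect_reflect)
  ultimately show "cond_L M f g" by simp
qed (use f g cond_L_reflect in blast)

lemma cond_O_reflect_iff:
  assumes f: "signed_measure M f" "reflectable f" and g: "signed_measure M g" "reflectable g"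
  shows "cond_O M (reflect P N f) (reflect P N g) \<longleftrightarrow> cond_O M f g"
proof
  assume "cond_O M (reflect P N f) (reflect P N g)"
  then have "cond_O M (reflect P N (reflect P N f)) (reflect P N (reflect P N g))"
    by (rule cond_O_reflect[OF signed_measure_reflect[OF f]
          reflectable_reflect[OF signed_measure_empty[OF f(1)] f(2)]
          signed_measure_reflect[OF g] reflectable_reflect[OF signed_measure_empty[OF g(1)] g(2)]])
  moreover have "cond_O M (reflect P N (reflect P N f)) (reflect P N (reflect P N g)) \<longleftrightarrow> cond_O M f g"
    using f g by (intro cond_O_cong) (simp_all add: reflect_reflect)
  ultimately show "cond_O M f g" by simp
qed (use f g cond_O_reflect in blast)

lemma sum_parts_le_total_variation:
  assumes "f {} = 0" and F: "finite F" "F \<subseteq> sets M" "disjoint F" "\<Union>F \<subseteq> C"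
  shows "(\<Sum>B\<in>F. \<bar>f (B \<inter> P)\<bar> + \<bar>f (B \<inter> N)\<bar>) \<le> total_variation M f C"
proof -
  have "(\<Sum>b\<in>UNIV. \<bar>f (B \<inter> (if b then P else N))\<bar>) = \<bar>f (B \<inter> P)\<bar> + \<bar>f (B \<inter> N)\<bar>" for B
    by (simp add: UNIV_bool add.commute)
  moreover have "(\<Sum>B\<in>F. \<Sum>b\<in>UNIV. \<bar>f (B \<inter> (if b then P else N))\<bar>) \<le> total_variation M f C"
    using assms P_sets N_sets disjoint
    by (intro sum_refinement_le_total_variation) (auto simp: disjoint_family_on_def)
  ultimately show ?thesis by simp
qed

lemma total_variation_reflect_le:
  assumes "f {} = 0"
  shows "total_variation M (reflect P N f) C \<le> total_variation M f C"
  unfolding total_variation_def[of M "reflect P N f"]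
proof (rule SUP_least, clarify)
  fix F assume F: "finite F" "F \<subseteq> sets M" "disjoint F" "\<Union>F \<subseteq> C"
  have "(\<Sum>B\<in>F. \<bar>reflect P N f B\<bar>) \<le> (\<Sum>B\<in>F. \<bar>f (B \<inter> P)\<bar> + \<bar>f (B \<inter> N)\<bar>)"
    by (intro sum_mono) (simp add: reflect_def ereal_abs_diff_le)
  also have "\<dots> \<le> total_variation M f C"
    by (rule sum_parts_le_total_variation[where f = f, OF assms F])
  finally show "(\<Sum>B\<in>F. \<bar>reflect P N f B\<bar>) \<le> total_variation M f C" .
qed

lemma sigma_finite_signed_measure_reflect:
  assumes "sigma_finite_signed_measure M f" "reflectable f"
  shows "sigma_finite_signed_measure M (reflect P N f)"
proof -
  have f: "signed_measure M f" using assms(1) by (simp add: sigma_finite_signed_measure_def)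
  obtain C :: "nat \<Rightarrow> 'a set" where C: "range C \<subseteq> sets M" "(\<Union>n. C n) = space M"
    and finite: "\<forall>n. total_variation M f (C n) < \<infinity>"
    using assms(1) by (auto simp: sigma_finite_signed_measure_def)
  have "total_variation M (reflect P N f) (C n) < \<infinity>" for n
    using total_variation_reflect_le[of f "C n", OF signed_measure_empty[OF f]] finite
    by (meson order.strict_trans1)
  then show ?thesis
    using signed_measure_reflect[OF f assms(2)] C unfolding sigma_finite_signed_measure_def by blast
qed

lemma hahn_reflectable:
  assumes "signed_measure M \<mu>" "hahn_decomposition M \<mu> P N"
  shows "reflectable \<mu>"
  unfolding reflectable_def
proof (intro ballI notI)
  fix A assume A: "A \<in> sets M" and inf: "\<bar>\<mu> (A \<inter> P)\<bar> = \<infinity> \<and> \<bar>\<mu> (A \<inter> N)\<bar> = \<infinity>"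
  have "0 \<le> \<mu> (A \<inter> P)" "\<mu> (A \<inter> N) \<le> 0"
    using assms(2) A P_sets N_sets by (auto simp: hahn_decomposition_def)
  with inf have "\<mu> (A \<inter> P) = \<infinity>" "\<mu> (A \<inter> N) = -\<infinity>"
    by (cases "\<mu> (A \<inter> P)"; cases "\<mu> (A \<inter> N)"; simp)+
  then show False
    using signed_measure_one_sided[OF assms(1)] A P_sets N_sets by blast
qed

lemma hahn_reflect_eq_abs:
  assumes "hahn_decomposition M \<mu> P N" "A \<in> sets M"
  shows "reflect P N \<mu> A = \<bar>\<mu> (A \<inter> P)\<bar> + \<bar>\<mu> (A \<inter> N)\<bar>"
proof -
  have "0 \<le> \<mu> (A \<inter> P)" "\<mu> (A \<inter> N) \<le> 0"
    using assms P_sets N_sets by (auto simp: hahn_decomposition_def)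
  then show ?thesis
    by (cases "\<mu> (A \<inter> P)"; cases "\<mu> (A \<inter> N)") (auto simp: reflect_def)
qed

lemma total_variation_hahn:
  assumes \<mu>: "signed_measure M \<mu>" and hahn: "hahn_decomposition M \<mu> P N" and A: "A \<in> sets M"
  shows "total_variation M \<mu> A = reflect P N \<mu> A"
proof (rule antisym)
  have \<rho>: "signed_measure M (reflect P N \<mu>)"
    using signed_measure_reflect[OF \<mu> hahn_reflectable[OF \<mu> hahn]] .
  show "total_variation M \<mu> A \<le> reflect P N \<mu> A"
    unfolding total_variation_def
  proof (rule SUP_least, clarify)
    fix F assume F: "finite F" "F \<subseteq> sets M" "disjoint F" "\<Union>F \<subseteq> A"
    have "(\<Sum>B\<in>F. \<bar>\<mu> B\<bar>) \<le> (\<Sum>B\<in>F. reflect P N \<mu> B)"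
    proof (rule sum_mono)
      fix B assume "B \<in> F"
      then have B: "B \<in> sets M" using F(2) by auto
      have "\<bar>\<mu> B\<bar> = \<bar>\<mu> (B \<inter> P) + \<mu> (B \<inter> N)\<bar>" using signed_measure_split[OF \<mu> B] by simp
      also have "\<dots> \<le> reflect P N \<mu> B"
        using ereal_abs_add_le hahn_reflect_eq_abs[OF hahn B] by simp
      finally show "\<bar>\<mu> B\<bar> \<le> reflect P N \<mu> B" .
    qed
    also have "\<dots> = reflect P N \<mu> (\<Union>F)"
      by (rule signed_measure_Union[OF \<rho> F(1-3)])
    also have "\<dots> \<le> reflect P N \<mu> A"
    proof (rule signed_measure_mono[OF \<rho> _ A F(4)])
      show "\<Union>F \<in> sets M" using F(1,2) by (rule sets.finite_Union)
      then show "0 \<le> reflect P N \<mu> (A - \<Union>F)"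
        using hahn_reflect_eq_abs[OF hahn, of "A - \<Union>F"] A by simp
    qed
    finally show "(\<Sum>B\<in>F. \<bar>\<mu> B\<bar>) \<le> reflect P N \<mu> A" .
  qed
  have "reflect P N \<mu> A = (\<Sum>B\<in>{A}. \<bar>\<mu> (B \<inter> P)\<bar> + \<bar>\<mu> (B \<inter> N)\<bar>)"
    by (simp add: hahn_reflect_eq_abs[OF hahn A])
  also have "\<dots> \<le> total_variation M \<mu> A"
    using A by (intro sum_parts_le_total_variation signed_measure_empty[OF \<mu>]) auto
  finally show "reflect P N \<mu> A \<le> total_variation M \<mu> A" .
qed

end

lemma hahn_decomposition_imp_bipartition:
  "hahn_decomposition M \<mu> P N \<Longrightarrow> measurable_bipartition M P N"
  by (simp add: hahn_decomposition_def measurable_bipartition_def)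

theorem lemma1p1:
  fixes M :: "'a measure" and \<mu> \<nu> :: "'a set \<Rightarrow> ereal" and Pos Neg :: "'a set"
  assumes "sigma_finite_signed_measure M \<mu>"
    and "hahn_decomposition M \<mu> Pos Neg"
    and "sigma_finite_signed_measure M \<nu>"
    and "\<forall>A\<in>sets M. \<not> (\<bar>\<nu> (A \<inter> Pos)\<bar> = \<infinity> \<and> \<bar>\<nu> (A \<inter> Neg)\<bar> = \<infinity>)"
  defines "\<nu>' \<equiv> (\<lambda>A. \<nu> (A \<inter> Pos) - \<nu> (A \<inter> Neg))"
  shows "sigma_finite_signed_measure M \<nu>'
    \<and> (cond_L M \<mu> \<nu> \<longleftrightarrow> cond_L M (total_variation M \<mu>) \<nu>')
    \<and> (cond_O M \<mu> \<nu> \<longleftrightarrow> cond_O M (total_variation M \<mu>) \<nu>')"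
proof -
  interpret measurable_bipartition M Pos Neg
    using assms(2) by (rule hahn_decomposition_imp_bipartition)
  have \<mu>: "signed_measure M \<mu>" "reflectable \<mu>"
    using assms(1) hahn_reflectable[OF _ assms(2)] by (auto simp: sigma_finite_signed_measure_def)
  have \<nu>: "signed_measure M \<nu>" "reflectable \<nu>"
    using assms(3,4) by (auto simp: sigma_finite_signed_measure_def reflectable_def)
  have \<nu>'_reflect: "\<nu>' = reflect Pos Neg \<nu>"
    by (simp add: \<nu>'_def fun_eq_iff reflect_def)
  have TV: "\<forall>A\<in>sets M. total_variation M \<mu> A = reflect Pos Neg \<mu> A"
    using total_variation_hahn[OF \<mu>(1) assms(2)] by blast
  have "cond_L M (total_variation M \<mu>) \<nu>' \<longleftrightarrow> cond_L M \<mu> \<nu>"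
    using cond_L_cong[OF TV, of \<nu>' \<nu>'] cond_L_reflect_iff[OF \<mu> \<nu>] by (simp add: \<nu>'_reflect)
  moreover have "cond_O M (total_variation M \<mu>) \<nu>' \<longleftrightarrow> cond_O M \<mu> \<nu>"
    using cond_O_cong[OF TV, of \<nu>' \<nu>'] cond_O_reflect_iff[OF \<mu> \<nu>] by (simp add: \<nu>'_reflect)
  moreover have "sigma_finite_signed_measure M \<nu>'"
    unfolding \<nu>'_reflect by (rule sigma_finite_signed_measure_reflect[OF assms(3) \<nu>(2)])
  ultimately show ?thesis by blast
qed

end
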